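(* Let $\{U_y\}_{y\in\mathbb{Z}}$ be $3\times 3$ unitary matrices $U_y=\begin{bmatrix} a_y & b_y & c_y\\ d_y & e_y & f_y\\ g_y & h_y & i_y\end{bmatrix}$ with complex entries, defining the three-state inhomogeneous quantum walk on $\mathbb{Z}$ described in the context. Let $\lambda\in S^1=\{z\in\mathbb{C}:|z|=1\}$ and assume that for every $y\in\mathbb{Z}$ the quantities $a_y(\lambda-e_y)+b_yd_y$ and $h_yf_y+i_y(\lambda-e_y)$ are nonzero (so that all entries below are finite). Define, for $y\in\mathbb{Z}$, the transfer matrices $T^{(+)}_y=(t^{(+)}_{jk})_{j,k=1}^3$ and $T^{(-)}_y=(t^{(-)}_{jk})_{j,k=1}^3$ by \[ t^{(+)}_{11}=\frac{(\lambda-e_y)(\lambda^2-g_{y-1}c_y)-g_{y-1}b_yf_y}{\lambda\{a_y(\lambda-e_y)+b_yd_y\}},\quad t^{(+)}_{12}=-\frac{h_{y-1}\{b_yf_y+c_y(\lambda-e_y)\}}{\lambda\{a_y(\lambda-e_y)+b_yd_y\}},\quad t^{(+)}_{13}=-\frac{i_{y-1}\{b_yf_y+c_y(\lambda-e_y)\}}{\lambda\{a_y(\lambda-e_y)+b_yd_y\}}, \] \[ t^{(+)}_{21}=\frac{\lambda^2d_y+g_{y-1}(a_yf_y-c_yd_y)}{\lambda\{a_y(\lambda-e_y)+b_yd_y\}},\quad t^{(+)}_{22}=\frac{h_{y-1}(a_yf_y-c_yd_y)}{\lambda\{a_y(\lambda-e_y)+b_yd_y\}},\quad t^{(+)}_{23}=\frac{i_{y-1}(a_yf_y-c_yd_y)}{\lambda\{a_y(\lambda-e_y)+b_yd_y\}},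 \] \[ t^{(+)}_{31}=\frac{g_{y-1}}{\lambda},\quad t^{(+)}_{32}=\frac{h_{y-1}}{\lambda},\quad t^{(+)}_{33}=\frac{i_{y-1}}{\lambda}, \] and \[ t^{(-)}_{11}=\frac{a_{y+1}}{\lambda},\quad t^{(-)}_{12}=\frac{b_{y+1}}{\lambda},\quad t^{(-)}_{13}=\frac{c_{y+1}}{\lambda}, \] \[ t^{(-)}_{21}=-\frac{a_{y+1}(f_yg_y-i_yd_y)}{\lambda\{h_yf_y+i_y(\lambda-e_y)\}},\quad t^{(-)}_{22}=-\frac{b_{y+1}(f_yg_y-i_yd_y)}{\lambda\{h_yf_y+i_y(\lambda-e_y)\}},\quad t^{(-)}_{23}=\frac{\lambda^2f_y-c_{y+1}(f_yg_y-i_yd_y)}{\lambda\{h_yf_y+i_y(\lambda-e_y)\}}, \] \[ t^{(-)}_{31}=-\frac{a_{y+1}\{h_yd_y+g_y(\lambda-e_y)\}}{\lambda\{h_yf_y+i_y(\lambda-e_y)\}},\quad t^{(-)}_{32}=-\frac{b_{y+1}\{h_yd_y+g_y(\lambda-e_y)\}}{\lambda\{h_yf_y+i_y(\lambda-e_y)\}},\quad t^{(-)}_{33}=\frac{(\lambda-e_y)(\lambda^2-g_yc_{y+1})-h_yc_{y+1}d_y}{\lambda\{h_yf_y+i_y(\lambda-e_y)\}}. \] If $\Psi\in\mathrm{Map}(\mathbb{Z},\mathbb{C}^3)$, $\Psi(x)=[\Psi^L(x),\Psi^O(x),\Psi^R(x)]^T$, solves the eigenvalue equation $U^{(s)}\Psi=\lambda\Psi$,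 then \[ \Psi(x)=\begin{cases} T^{(+)}_xT^{(+)}_{x-1}\cdots T^{(+)}_1\Psi(0) & (x\ge 1),\\ \Psi(0) & (x=0),\\ T^{(-)}_xT^{(-)}_{x+1}\cdots T^{(-)}_{-1}\Psi(0) & (x\le -1),\end{cases} \] and the measure $\mu(x)=\|\Psi(x)\|^2=|\Psi^L(x)|^2+|\Psi^O(x)|^2+|\Psi^R(x)|^2$ $(x\in\mathbb{Z})$ is a stationary measure of the walk, i.e. $\mu\in\Sigma_s$.
   Context: The three-state quantum walk on $\mathbb{Z}$: for $x\in\mathbb{Z}$ set $U_x=P_x+R_x+Q_x$ where $P_x$ keeps only the first row $(a_x,b_x,c_x)$ of $U_x$ (other rows zero), $R_x$ keeps only the second row $(d_x,e_x,f_x)$, and $Q_x$ keeps only the third row $(g_x,h_x,i_x)$. The operator $U^{(s)}$ acts on $\Psi\in(\mathbb{C}^3)^{\mathbb{Z}}=\mathrm{Map}(\mathbb{Z},\mathbb{C}^3)$ by $(U^{(s)}\Psi)(x)=P_{x+1}\Psi(x+1)+R_x\Psi(x)+Q_{x-1}\Psi(x-1)$; the walk's time evolution is $\Psi_n=(U^{(s)})^n\Psi_0$. Equivalently, $U^{(s)}\Psi=\lambda\Psi$ means, for all $x$: $\lambda\Psi^L(x)=a_{x+1}\Psi^L(x+1)+b_{x+1}\Psi^O(x+1)+c_{x+1}\Psi^R(x+1)$, $\lambda\Psi^O(x)=d_x\Psi^L(x)+e_x\Psi^O(x)+f_x\Psi^R(x)$, $\lambda\Psi^R(x)=g_{x-1}\Psi^L(x-1)+h_{x-1}\Psi^O(x-1)+i_{x-1}\Psi^R(x-1)$.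 Let $\phi:(\mathbb{C}^3)^{\mathbb{Z}}\to[0,\infty)^{\mathbb{Z}}$, $\phi(\Psi)(x)=|\Psi^L(x)|^2+|\Psi^O(x)|^2+|\Psi^R(x)|^2$. The set of stationary measures is $\Sigma_s=\{\phi(\Psi_0): \Psi_0\in(\mathbb{C}^3)^{\mathbb{Z}},\ \phi((U^{(s)})^n\Psi_0)=\phi(\Psi_0)\text{ for all } n\ge 0\}$. *)

theory Defs
  imports "HOL-Analysis.Analysis"
begin

text \<open>Three-state quantum walk on the integers. Components of a vector in complex^3:
  index 1 = L, 2 = O, 3 = R.\<close>

definition mat3 :: "'a \<Rightarrow> 'a \<Rightarrow> 'a \<Rightarrow> 'a \<Rightarrow> 'a \<Rightarrow> 'a \<Rightarrow> 'a \<Rightarrow> 'a \<Rightarrow> 'a \<Rightarrow> 'a^3^3" where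
  "mat3 x11 x12 x13 x21 x22 x23 x31 x32 x33 =
     (\<chi> r k. if r = 1 then (if k = 1 then x11 else if k = 2 then x12 else x13)
             else if r = 2 then (if k = 1 then x21 else if k = 2 then x22 else x23)
             else (if k = 1 then x31 else if k = 2 then x32 else x33))"

definition coin :: "(int \<Rightarrow> complex) \<Rightarrow> (int \<Rightarrow> complex) \<Rightarrow> (int \<Rightarrow> complex) \<Rightarrow>
    (int \<Rightarrow> complex) \<Rightarrow> (int \<Rightarrow> complex) \<Rightarrow> (int \<Rightarrow> complex) \<Rightarrow>
    (int \<Rightarrow> complex) \<Rightarrow> (int \<Rightarrow> complex) \<Rightarrow> (int \<Rightarrow> complex) \<Rightarrow> int \<Rightarrow> complex^3^3" where
  "coin a b c d e f g h i y = mat3 (a y) (b y) (c y) (d y) (e y) (f y) (g y) (h y) (i y)"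

definition adjoint3 :: "complex^3^3 \<Rightarrow> complex^3^3" where
  "adjoint3 M = (\<chi> r k. cnj (M $ k $ r))"

definition unitary3 :: "complex^3^3 \<Rightarrow> bool" where
  "unitary3 M \<longleftrightarrow> M ** adjoint3 M = mat 1 \<and> adjoint3 M ** M = mat 1"

definition Pm :: "complex^3^3 \<Rightarrow> complex^3^3" where
  "Pm M = (\<chi> r k. if r = 1 then M $ r $ k else 0)"
definition Rm :: "complex^3^3 \<Rightarrow> complex^3^3" where
  "Rm M = (\<chi> r k. if r = 2 then M $ r $ k else 0)"
definition Qm :: "complex^3^3 \<Rightarrow> complex^3^3" where
  "Qm M = (\<chi> r k. if r = 3 then M $ r $ k else 0)"

definition Us :: "(int \<Rightarrow> complex^3^3) \<Rightarrow> (int \<Rightarrow> complex^3) \<Rightarrow> (int \<Rightarrow> complex^3)" where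
  "Us U \<Psi> = (\<lambda>x. Pm (U (x+1)) *v \<Psi> (x+1) + Rm (U x) *v \<Psi> x + Qm (U (x-1)) *v \<Psi> (x-1))"

definition phi :: "(int \<Rightarrow> complex^3) \<Rightarrow> int \<Rightarrow> real" where
  "phi \<Psi> x = (cmod (\<Psi> x $ 1))^2 + (cmod (\<Psi> x $ 2))^2 + (cmod (\<Psi> x $ 3))^2"

definition Sigma_s :: "(int \<Rightarrow> complex^3^3) \<Rightarrow> (int \<Rightarrow> real) set" where
  "Sigma_s U = {phi \<Psi>0 | \<Psi>0. \<forall>n::nat. phi ((Us U ^^ n) \<Psi>0) = phi \<Psi>0}"

definition Tplus :: "(int \<Rightarrow> complex) \<Rightarrow> (int \<Rightarrow> complex) \<Rightarrow> (int \<Rightarrow> complex) \<Rightarrow>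
    (int \<Rightarrow> complex) \<Rightarrow> (int \<Rightarrow> complex) \<Rightarrow> (int \<Rightarrow> complex) \<Rightarrow>
    (int \<Rightarrow> complex) \<Rightarrow> (int \<Rightarrow> complex) \<Rightarrow> (int \<Rightarrow> complex) \<Rightarrow> complex \<Rightarrow> int \<Rightarrow> complex^3^3" where
  "Tplus a b c d e f g h i l y =
    (let D = l * (a y * (l - e y) + b y * d y) in
     mat3
      (((l - e y) * (l^2 - g (y-1) * c y) - g (y-1) * b y * f y) / D)
      (- (h (y-1) * (b y * f y + c y * (l - e y))) / D)
      (- (i (y-1) * (b y * f y + c y * (l - e y))) / D)
      ((l^2 * d y + g (y-1) * (a y * f y - c y * d y)) / D)
      ((h (y-1) * (a y * f y - c y * d y)) / D)
      ((i (y-1) * (a y * f y - c y * d y)) / D)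
      (g (y-1) / l) (h (y-1) / l) (i (y-1) / l))"

definition Tminus :: "(int \<Rightarrow> complex) \<Rightarrow> (int \<Rightarrow> complex) \<Rightarrow> (int \<Rightarrow> complex) \<Rightarrow>
    (int \<Rightarrow> complex) \<Rightarrow> (int \<Rightarrow> complex) \<Rightarrow> (int \<Rightarrow> complex) \<Rightarrow>
    (int \<Rightarrow> complex) \<Rightarrow> (int \<Rightarrow> complex) \<Rightarrow> (int \<Rightarrow> complex) \<Rightarrow> complex \<Rightarrow> int \<Rightarrow> complex^3^3" where
  "Tminus a b c d e f g h i l y =
    (let D = l * (h y * f y + i y * (l - e y)) in
     mat3
      (a (y+1) / l) (b (y+1) / l) (c (y+1) / l)
      (- (a (y+1) * (f y * g y - i y * d y)) / D)
      (- (b (y+1) * (f y * g y - i y * d y)) / D)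
      ((l^2 * f y - c (y+1) * (f y * g y - i y * d y)) / D)
      (- (a (y+1) * (h y * d y + g y * (l - e y))) / D)
      (- (b (y+1) * (h y * d y + g y * (l - e y))) / D)
      (((l - e y) * (l^2 - g y * c (y+1)) - h y * c (y+1) * d y) / D))"

fun Tpos_prod :: "(int \<Rightarrow> complex^3^3) \<Rightarrow> nat \<Rightarrow> complex^3^3" where
  "Tpos_prod T 0 = mat 1"
| "Tpos_prod T (Suc n) = T (int (Suc n)) ** Tpos_prod T n"

fun Tneg_prod :: "(int \<Rightarrow> complex^3^3) \<Rightarrow> nat \<Rightarrow> complex^3^3" where
  "Tneg_prod T 0 = mat 1"
| "Tneg_prod T (Suc n) = T (- int (Suc n)) ** Tneg_prod T n"

end

theory Submission
  imports Defs
begin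

text \<open>The eigenvalue equation at x couples Psi(x-1), Psi(x), Psi(x+1) only through one component
  each, so it can be solved for Psi(x) in terms of Psi(x-1) (or of Psi(x+1)): the middle equation
  eliminates the O-component, which is where the denominators come from, and iterating gives the
  transfer-matrix formula. Stationarity needs no unitarity at all: U^(s) acts on an eigenvector
  by multiplication with the unimodular number lambda, which leaves every |Psi(x)|^2 unchanged.\<close>

lemma mat3_mult_vec_nth:
  "(mat3 x11 x12 x13 x21 x22 x23 x31 x32 x33 *v v) $ 1 = x11 * v $ 1 + x12 * v $ 2 + x13 * v $ 3"
  "(mat3 x11 x12 x13 x21 x22 x23 x31 x32 x33 *v v) $ 2 = x21 * v $ 1 + x22 * v $ 2 + x23 * v $ 3"
  "(mat3 x11 x12 x13 x21 x22 x23 x31 x32 x33 *v v) $ 3 = x31 * v $ 1 + x32 * v $ 2 + x33 * v $ 3"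
  by (simp_all add: mat3_def matrix_vector_mult_def sum_3)

lemma eq_linear_combination_divide:
  fixes x D p q r u v w :: "'a :: field"
  assumes "D \<noteq> 0" and "x * D = p * u + q * v + r * w"
  shows "x = p / D * u + q / D * v + r / D * w"
  using assms by (simp add: field_simps)

lemma Us_coin_nth:
  "Us (coin a b c d e f g h i) \<Psi> x $ 1
     = a (x+1) * \<Psi> (x+1) $ 1 + b (x+1) * \<Psi> (x+1) $ 2 + c (x+1) * \<Psi> (x+1) $ 3"
  "Us (coin a b c d e f g h i) \<Psi> x $ 2 = d x * \<Psi> x $ 1 + e x * \<Psi> x $ 2 + f x * \<Psi> x $ 3"
  "Us (coin a b c d e f g h i) \<Psi> x $ 3
     = g (x-1) * \<Psi> (x-1) $ 1 + h (x-1) * \<Psi> (x-1) $ 2 + i (x-1) * \<Psi> (x-1) $ 3"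
  by (simp_all add: Us_def Pm_def Rm_def Qm_def coin_def mat3_def matrix_vector_mult_def sum_3)

lemma eigen_equation_nth:
  assumes "Us (coin a b c d e f g h i) \<Psi> = (\<lambda>x. l *s \<Psi> x)"
  shows "l * \<Psi> x $ 1 = a (x+1) * \<Psi> (x+1) $ 1 + b (x+1) * \<Psi> (x+1) $ 2 + c (x+1) * \<Psi> (x+1) $ 3"
    and "l * \<Psi> x $ 2 = d x * \<Psi> x $ 1 + e x * \<Psi> x $ 2 + f x * \<Psi> x $ 3"
    and "l * \<Psi> x $ 3 = g (x-1) * \<Psi> (x-1) $ 1 + h (x-1) * \<Psi> (x-1) $ 2 + i (x-1) * \<Psi> (x-1) $ 3"
  using Us_coin_nth[of a b c d e f g h i \<Psi> x] assms by (simp_all add: fun_eq_iff vec_eq_iff)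

lemma eigenvector_Tplus_step:
  assumes l: "l \<noteq> 0" and nz: "a x * (l - e x) + b x * d x \<noteq> 0"
    and eig: "Us (coin a b c d e f g h i) \<Psi> = (\<lambda>x. l *s \<Psi> x)"
  shows "\<Psi> x = Tplus a b c d e f g h i l x *v \<Psi> (x-1)"
proof -
  define D where "D = l * (a x * (l - e x) + b x * d x)"
  have D: "D \<noteq> 0" using l nz by (simp add: D_def)
  have E1: "l * \<Psi> (x-1) $ 1 = a x * \<Psi> x $ 1 + b x * \<Psi> x $ 2 + c x * \<Psi> x $ 3"
    using eigen_equation_nth(1)[OF eig, of "x-1"] by simp
  note E2 = eigen_equation_nth(2)[OF eig, of x]
  note E3 = eigen_equation_nth(3)[OF eig, of x]
  have "\<Psi> x $ 1 = ((l - e x) * (l^2 - g (x-1) * c x) - g (x-1) * b x * f x) / D * \<Psi> (x-1) $ 1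
      + (- (h (x-1) * (b x * f x + c x * (l - e x)))) / D * \<Psi> (x-1) $ 2
      + (- (i (x-1) * (b x * f x + c x * (l - e x)))) / D * \<Psi> (x-1) $ 3"
    by (rule eq_linear_combination_divide[OF D]) (use E1 E2 E3 in \<open>unfold D_def, algebra\<close>)
  moreover have "\<Psi> x $ 2 = (l^2 * d x + g (x-1) * (a x * f x - c x * d x)) / D * \<Psi> (x-1) $ 1
      + h (x-1) * (a x * f x - c x * d x) / D * \<Psi> (x-1) $ 2
      + i (x-1) * (a x * f x - c x * d x) / D * \<Psi> (x-1) $ 3"
    by (rule eq_linear_combination_divide[OF D]) (use E1 E2 E3 in \<open>unfold D_def, algebra\<close>)
  moreover have "\<Psi> x $ 3 = g (x-1) / l * \<Psi> (x-1) $ 1 + h (x-1) / l * \<Psi> (x-1) $ 2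
      + i (x-1) / l * \<Psi> (x-1) $ 3"
    by (rule eq_linear_combination_divide[OF l]) (use E3 in algebra)
  ultimately show ?thesis
    by (simp add: vec_eq_iff forall_3 Tplus_def Let_def mat3_mult_vec_nth D_def)
qed

lemma eigenvector_Tminus_step:
  assumes l: "l \<noteq> 0" and nz: "h x * f x + i x * (l - e x) \<noteq> 0"
    and eig: "Us (coin a b c d e f g h i) \<Psi> = (\<lambda>x. l *s \<Psi> x)"
  shows "\<Psi> x = Tminus a b c d e f g h i l x *v \<Psi> (x+1)"
proof -
  define D where "D = l * (h x * f x + i x * (l - e x))"
  have D: "D \<noteq> 0" using l nz by (simp add: D_def)
  note E1 = eigen_equation_nth(1)[OF eig, of x]
  note E2 = eigen_equation_nth(2)[OF eig, of x]
  have E3: "l * \<Psi> (x+1) $ 3 = g x * \<Psi> x $ 1 + h x * \<Psi> x $ 2 + i x * \<Psi> x $ 3"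
    using eigen_equation_nth(3)[OF eig, of "x+1"] by simp
  have "\<Psi> x $ 1 = a (x+1) / l * \<Psi> (x+1) $ 1 + b (x+1) / l * \<Psi> (x+1) $ 2
      + c (x+1) / l * \<Psi> (x+1) $ 3"
    by (rule eq_linear_combination_divide[OF l]) (use E1 in algebra)
  moreover have "\<Psi> x $ 2 = (- (a (x+1) * (f x * g x - i x * d x))) / D * \<Psi> (x+1) $ 1
      + (- (b (x+1) * (f x * g x - i x * d x))) / D * \<Psi> (x+1) $ 2
      + (l^2 * f x - c (x+1) * (f x * g x - i x * d x)) / D * \<Psi> (x+1) $ 3"
    by (rule eq_linear_combination_divide[OF D]) (use E1 E2 E3 in \<open>unfold D_def, algebra\<close>)
  moreover have "\<Psi> x $ 3 = (- (a (x+1) * (h x * d x + g x * (l - e x)))) / D * \<Psi> (x+1) $ 1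
      + (- (b (x+1) * (h x * d x + g x * (l - e x)))) / D * \<Psi> (x+1) $ 2
      + ((l - e x) * (l^2 - g x * c (x+1)) - h x * c (x+1) * d x) / D * \<Psi> (x+1) $ 3"
    by (rule eq_linear_combination_divide[OF D]) (use E1 E2 E3 in \<open>unfold D_def, algebra\<close>)
  ultimately show ?thesis
    by (simp add: vec_eq_iff forall_3 Tminus_def Let_def mat3_mult_vec_nth D_def)
qed

lemma Tpos_prod_transfer:
  assumes "\<And>x. x \<ge> 1 \<Longrightarrow> \<Psi> x = T x *v \<Psi> (x-1)"
  shows "\<Psi> (int n) = Tpos_prod T n *v \<Psi> 0"
proof (induction n)
  case 0
  then show ?case by simp
next
  case (Suc n)
  have "\<Psi> (int (Suc n)) = T (int (Suc n)) *v \<Psi> (int n)"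
    using assms[of "int (Suc n)"] by simp
  with Suc show ?case by (simp add: matrix_vector_mul_assoc)
qed

lemma Tneg_prod_transfer:
  assumes "\<And>x. x \<le> -1 \<Longrightarrow> \<Psi> x = T x *v \<Psi> (x+1)"
  shows "\<Psi> (- int n) = Tneg_prod T n *v \<Psi> 0"
proof (induction n)
  case 0
  then show ?case by simp
next
  case (Suc n)
  have "\<Psi> (- int (Suc n)) = T (- int (Suc n)) *v \<Psi> (- int n)"
    using assms[of "- int (Suc n)"] by simp
  with Suc show ?case by (simp add: matrix_vector_mul_assoc)
qed

lemma Us_scale:
  "Us U (\<lambda>x. c *s \<Psi> x) = (\<lambda>x. c *s Us U \<Psi> x)"
  unfolding Us_def
  by (rule ext) (simp add: vec_eq_iff matrix_vector_mult_def sum_distrib_left algebra_simps)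

lemma funpow_Us_eigenvector:
  assumes "Us U \<Psi> = (\<lambda>x. l *s \<Psi> x)"
  shows "(Us U ^^ n) \<Psi> = (\<lambda>x. l^n *s \<Psi> x)"
proof (induction n)
  case 0
  then show ?case by (simp add: vec_eq_iff)
next
  case (Suc n)
  then show ?case by (simp add: Us_scale assms vec_eq_iff algebra_simps)
qed

lemma phi_scale_unimodular:
  assumes "cmod c = 1"
  shows "phi (\<lambda>x. c *s \<Psi> x) = phi \<Psi>"
  using assms by (simp add: phi_def fun_eq_iff norm_mult)

lemma eigenvector_phi_in_Sigma_s:
  assumes "Us U \<Psi> = (\<lambda>x. l *s \<Psi> x)" and "cmod l = 1"
  shows "phi \<Psi> \<in> Sigma_s U"
proof -
  have "phi ((Us U ^^ n) \<Psi>) = phi \<Psi>" for n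
    using assms by (simp add: funpow_Us_eigenvector phi_scale_unimodular norm_power)
  then show ?thesis
    unfolding Sigma_s_def by blast
qed

theorem theorem1:
  fixes a b c d e f g h i :: "int \<Rightarrow> complex"
    and l :: complex
    and \<Psi> :: "int \<Rightarrow> complex^3"
  assumes unitary: "\<forall>y. unitary3 (coin a b c d e f g h i y)"
    and lam: "cmod l = 1"
    and nz1: "\<forall>y. a y * (l - e y) + b y * d y \<noteq> 0"
    and nz2: "\<forall>y. h y * f y + i y * (l - e y) \<noteq> 0"
    and eig: "Us (coin a b c d e f g h i) \<Psi> = (\<lambda>x. l *s \<Psi> x)"
  shows "(\<forall>x. \<Psi> x =
            (if x \<ge> 1 then Tpos_prod (Tplus a b c d e f g h i l) (nat x) *v \<Psi> 0
             else if x = 0 then \<Psi> 0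
             else Tneg_prod (Tminus a b c d e f g h i l) (nat (- x)) *v \<Psi> 0))
         \<and> phi \<Psi> \<in> Sigma_s (coin a b c d e f g h i)"
proof -
  have l: "l \<noteq> 0" using lam by auto
  have pos: "\<Psi> (int n) = Tpos_prod (Tplus a b c d e f g h i l) n *v \<Psi> 0" for n
    using Tpos_prod_transfer eigenvector_Tplus_step[OF l nz1[rule_format] eig] by blast
  have neg: "\<Psi> (- int n) = Tneg_prod (Tminus a b c d e f g h i l) n *v \<Psi> 0" for n
    using Tneg_prod_transfer eigenvector_Tminus_step[OF l nz2[rule_format] eig] by blast
  have "\<Psi> x =
          (if x \<ge> 1 then Tpos_prod (Tplus a b c d e f g h i l) (nat x) *v \<Psi> 0
           else if x = 0 then \<Psi> 0
           else Tneg_prod (Tminus a b c d e f g h i l) (nat (- x)) *v \<Psi> 0)" for x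
    using pos[of "nat x"] neg[of "nat (- x)"] by (simp split: if_splits)
  with eigenvector_phi_in_Sigma_s[OF eig lam] show ?thesis by blast
qed

end
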